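(* Let $T$ be a nonempty rooted tree (labelled, unlabelled planar, or unlabelled non-planar), $G=U(T)$ its underlying graph, and $U\colon X^T\to X^G$ the simplicial map sending $(F;L_0\supseteq\cdots\supseteq L_n)$ to $(U(F);L_0\setminus L_1,\dots,L_{n-1}\setminus L_n)$. Then $U$ is relatively Segal if and only if $T$ has exactly one vertex.
   Context: Rooted trees and $X^T$: A rooted tree $T$ is a finite tree with a distinguished root vertex; its vertex set is partially ordered by $v\le w$ iff $v$ lies on the path from the root to $w$; a planar rooted tree additionally carries a total order on the upward edges at each vertex. A rooted forest is a disjoint union of rooted trees. For a vertex subset $S$, the subforest spanned by $S$ ($H|_S$) has vertex set $S$, the edges with both endpoints in $S$, and the induced structure. A subset $L$ defines a lower subforest if $w\in L$, $v\le w$ imply $v\in L$. For $n\ge1$ a layering of $n-1$ cuts of a forest $F$ is a chain $V(F)=L_0\supseteq\cdots\supseteq L_n=\varnothing$ of subsets each defining a lower subforest. An admissible subforest of $T$ is the subforest spanned by $L_i\setminus L_j$ ($i\le j$) for a layering of $T$. $X^T_0$ is a point; $X^T_n$ ($n\ge1$) is the set of pairs $(H;L_0\supseteq\cdots\supseteq L_n)$ with $H$ admissible and $L_\bullet$ a layering of $H$; for $n\ge2$, $d_0(H;L_\bullet)=(H|_{L_1};L_1\supseteq\cdots\supseteq L_n)$, $d_n(H;L_\bullet)=(H|_{L_0\setminus L_{n-1}};L_0\setminus L_{n-1}\supseteq\cdots\supseteq L_{n-1}\setminus L_{n-1})$, $d_i$ ($0<i<n$) deletes $L_i$, and $s_i$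 repeats $L_i$. In the unlabelled versions one takes isomorphism classes of such pairs under isomorphisms of rooted forests (planar-structure preserving in the planar case) carrying each $L_i$ onto $L'_i$. Graphs and $X^G$: For a finite graph $G$, a subgraph is a vertex subset with a set of edges having endpoints in it. $X^G_0=\{\varnothing\}$; $X^G_1$ is the set of subgraphs of $G$; $X^G_n$ ($n\ge1$) is the set of tuples $(H;S_1,\dots,S_n)$ with $H$ a subgraph and $S_1,\dots,S_n$ a partition of $V(H)$ into possibly empty disjoint sets; $d_0$ and $d_n$ delete $S_1$, resp. $S_n$, together with these vertices and incident edges from $H$; $d_i$ ($1\le i\le n-1$) merges $S_i$ and $S_{i+1}$; $s_i$ inserts $\varnothing$ after $S_i$. For unlabelled $G$ one takes isomorphism classes of tuples under graph isomorphisms preserving the parts. A map $f\colon X\to Y$ of simplicial sets with $X_0,Y_0$ singletons is relatively Segal if for each $n\ge2$ the commutative square with top $f_n\colon X_n\to Y_n$, bottom $f_1\times\cdots\times f_1\colon X_1^{\times n}\to Y_1^{\times n}$, and vertical arrows the Segal maps $X_n\to X_1\times\cdots\times X_1$, $Y_n\to Y_1\times\cdots\times Y_1$ (restriction to the $n$ consecutive edges $\{i-1,i\}$), is a pullback of sets. *)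

theory Defs
  imports Main
begin

section \<open>Rooted trees (vertices of type 'v, directed parent-to-child edges)\<close>

definition rooted_tree :: "'v set \<Rightarrow> 'v \<Rightarrow> ('v \<times> 'v) set \<Rightarrow> bool" where
  "rooted_tree V r E \<longleftrightarrow> finite V \<and> r \<in> V \<and> E \<subseteq> V \<times> V \<and>
     (\<forall>v. (v, r) \<notin> E) \<and> (\<forall>v\<in>V - {r}. \<exists>!u. (u, v) \<in> E) \<and>
     (\<forall>v\<in>V. (r, v) \<in> E\<^sup>*)"

definition planar_structure :: "'v set \<Rightarrow> ('v \<times> 'v) set \<Rightarrow> ('v \<Rightarrow> 'v \<Rightarrow> bool) \<Rightarrow> bool" where
  "planar_structure V E P \<longleftrightarrow> (\<forall>p\<in>V. let C = {c. (p, c) \<in> E} in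
     (\<forall>a\<in>C. \<not> P a a) \<and> (\<forall>a\<in>C. \<forall>b\<in>C. \<forall>c\<in>C. P a b \<longrightarrow> P b c \<longrightarrow> P a c) \<and>
     (\<forall>a\<in>C. \<forall>b\<in>C. a \<noteq> b \<longrightarrow> P a b \<or> P b a))"

definition sub_edges :: "('v \<times> 'v) set \<Rightarrow> 'v set \<Rightarrow> ('v \<times> 'v) set" where
  "sub_edges E S = {(v, w). (v, w) \<in> E \<and> v \<in> S \<and> w \<in> S}"

definition forest_le :: "('v \<times> 'v) set \<Rightarrow> 'v set \<Rightarrow> 'v \<Rightarrow> 'v \<Rightarrow> bool" where
  "forest_le E S v w \<longleftrightarrow> (v, w) \<in> (sub_edges E S)\<^sup>*"

definition lower_sub :: "('v \<times> 'v) set \<Rightarrow> 'v set \<Rightarrow> 'v set \<Rightarrow> bool" where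
  "lower_sub E S L \<longleftrightarrow> L \<subseteq> S \<and> (\<forall>w\<in>L. \<forall>v\<in>S. forest_le E S v w \<longrightarrow> v \<in> L)"

definition layering :: "('v \<times> 'v) set \<Rightarrow> 'v set \<Rightarrow> nat \<Rightarrow> 'v set list \<Rightarrow> bool" where
  "layering E S n Ls \<longleftrightarrow> n \<ge> 1 \<and> length Ls = Suc n \<and> Ls ! 0 = S \<and> Ls ! n = {} \<and>
     (\<forall>i<n. Ls ! Suc i \<subseteq> Ls ! i) \<and> (\<forall>i\<le>n. lower_sub E S (Ls ! i))"

definition admissible :: "'v set \<Rightarrow> ('v \<times> 'v) set \<Rightarrow> 'v set \<Rightarrow> bool" where
  "admissible V E S \<longleftrightarrow> (\<exists>n Ls i j. layering E V n Ls \<and> i \<le> j \<and> j \<le> n \<and> S = Ls ! i - Ls ! j)"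

text \<open>Representatives of n-simplices of X^T (n >= 1): the admissible subforest
  (given by its vertex set S in T) and a layering of it.\<close>
definition repT :: "'v set \<Rightarrow> ('v \<times> 'v) set \<Rightarrow> nat \<Rightarrow> 'v set \<times> 'v set list \<Rightarrow> bool" where
  "repT V E n x \<longleftrightarrow> admissible V E (fst x) \<and> layering E (fst x) n (snd x)"

definition gedges :: "('v \<times> 'v) set \<Rightarrow> 'v set set" where
  "gedges E = {{v, w} | v w. (v, w) \<in> E}"

text \<open>Representatives of n-simplices of X^G (n >= 1): a subgraph (VH, EH) and an
  ordered partition [S_1,...,S_n] of VH into possibly empty disjoint sets.\<close>
definition repG :: "'v set \<Rightarrow> ('v \<times> 'v) set \<Rightarrow> nat \<Rightarrow> 'v set \<times> 'v set set \<times> 'v set list \<Rightarrow> bool" where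
  "repG V E n y \<longleftrightarrow> (case y of (VH, EH, Ss) \<Rightarrow>
     VH \<subseteq> V \<and> EH \<subseteq> gedges E \<and> (\<forall>e\<in>EH. e \<subseteq> VH) \<and> length Ss = n \<and>
     \<Union>(set Ss) = VH \<and> (\<forall>i<n. \<forall>j<n. i \<noteq> j \<longrightarrow> Ss ! i \<inter> Ss ! j = {}))"

definition Umap :: "('v \<times> 'v) set \<Rightarrow> 'v set \<times> 'v set list \<Rightarrow> 'v set \<times> 'v set set \<times> 'v set list" where
  "Umap E x = (case x of (S, Ls) \<Rightarrow>
     (S, gedges (sub_edges E S), map (\<lambda>i. Ls ! i - Ls ! Suc i) [0..<length Ls - 1]))"

definition segT :: "'v set \<times> 'v set list \<Rightarrow> ('v set \<times> 'v set list) list" where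
  "segT x = (case x of (S, Ls) \<Rightarrow>
     map (\<lambda>i. (Ls ! i - Ls ! Suc i, [Ls ! i - Ls ! Suc i, {}])) [0..<length Ls - 1])"

definition segG :: "'v set \<times> 'v set set \<times> 'v set list \<Rightarrow> ('v set \<times> 'v set set \<times> 'v set list) list" where
  "segG y = (case y of (VH, EH, Ss) \<Rightarrow>
     map (\<lambda>A. (A, {e\<in>EH. e \<subseteq> A}, [A])) Ss)"

datatype 'v flavour = Labelled | NonPlanar | Planar "'v \<Rightarrow> 'v \<Rightarrow> bool"

definition forest_iso :: "'v flavour \<Rightarrow> ('v \<times> 'v) set \<Rightarrow> ('v \<Rightarrow> 'v) \<Rightarrow> 'v set \<Rightarrow> 'v set \<Rightarrow> bool" where
  "forest_iso fl E f S S' \<longleftrightarrow> bij_betw f S S' \<and>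
     (\<forall>v\<in>S. \<forall>w\<in>S. (v, w) \<in> E \<longleftrightarrow> (f v, f w) \<in> E) \<and>
     (\<forall>P. fl = Planar P \<longrightarrow> (\<forall>p\<in>S. \<forall>a\<in>S. \<forall>b\<in>S. (p, a) \<in> E \<longrightarrow> (p, b) \<in> E \<longrightarrow>
        (P a b \<longleftrightarrow> P (f a) (f b))))"

definition isoT :: "'v flavour \<Rightarrow> ('v \<times> 'v) set \<Rightarrow> 'v set \<times> 'v set list \<Rightarrow> 'v set \<times> 'v set list \<Rightarrow> bool" where
  "isoT fl E x x' \<longleftrightarrow> (if fl = Labelled then x = x' else
     (\<exists>f. forest_iso fl E f (fst x) (fst x') \<and> length (snd x) = length (snd x') \<and>
        (\<forall>i<length (snd x). f ` (snd x ! i) = snd x' ! i)))"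

definition isoG :: "'v flavour \<Rightarrow> 'v set \<times> 'v set set \<times> 'v set list \<Rightarrow> 'v set \<times> 'v set set \<times> 'v set list \<Rightarrow> bool" where
  "isoG fl y y' \<longleftrightarrow> (if fl = Labelled then y = y' else
     (case y of (VH, EH, Ss) \<Rightarrow> case y' of (VH', EH', Ss') \<Rightarrow>
       \<exists>f. bij_betw f VH VH' \<and> (\<lambda>e. f ` e) ` EH = EH' \<and> length Ss = length Ss' \<and>
          (\<forall>i<length Ss. f ` (Ss ! i) = Ss' ! i)))"

text \<open>Simplices of X^T and X^G as (isomorphism) classes of representatives;
  in the labelled case the classes are singletons.\<close>
definition clsT :: "'v flavour \<Rightarrow> 'v set \<Rightarrow> ('v \<times> 'v) set \<Rightarrow> nat \<Rightarrow> 'v set \<times> 'v set list \<Rightarrow> ('v set \<times> 'v set list) set" where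
  "clsT fl V E n x = {x'. repT V E n x' \<and> isoT fl E x x'}"

definition XT :: "'v flavour \<Rightarrow> 'v set \<Rightarrow> ('v \<times> 'v) set \<Rightarrow> nat \<Rightarrow> ('v set \<times> 'v set list) set set" where
  "XT fl V E n = {clsT fl V E n x | x. repT V E n x}"

definition clsG :: "'v flavour \<Rightarrow> 'v set \<Rightarrow> ('v \<times> 'v) set \<Rightarrow> nat \<Rightarrow> 'v set \<times> 'v set set \<times> 'v set list \<Rightarrow> ('v set \<times> 'v set set \<times> 'v set list) set" where
  "clsG fl V E n y = {y'. repG V E n y' \<and> isoG fl y y'}"

definition XG :: "'v flavour \<Rightarrow> 'v set \<Rightarrow> ('v \<times> 'v) set \<Rightarrow> nat \<Rightarrow> ('v set \<times> 'v set set \<times> 'v set list) set set" where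
  "XG fl V E n = {clsG fl V E n y | y. repG V E n y}"

text \<open>Relative Segal condition: for each n >= 2 the canonical map
  X^T_n \<rightarrow> X^G_n \<times>_{(X^G_1)^n} (X^T_1)^n is a bijection (the square is a pullback of sets).\<close>
definition rel_segal :: "'v flavour \<Rightarrow> 'v set \<Rightarrow> ('v \<times> 'v) set \<Rightarrow> bool" where
  "rel_segal fl V E \<longleftrightarrow> (\<forall>n\<ge>2. \<forall>y\<in>XG fl V E n. \<forall>xs.
     (length xs = n \<and> (\<forall>i<n. xs ! i \<in> XT fl V E 1) \<and>
      (\<forall>i<n. \<forall>yr\<in>y. \<forall>xr\<in>xs ! i. clsG fl V E 1 (segG yr ! i) = clsG fl V E 1 (Umap E xr)))
     \<longrightarrow> (\<exists>!c. c \<in> XT fl V E n \<and>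
           (\<forall>xr\<in>c. clsG fl V E n (Umap E xr) = y \<and>
               (\<forall>i<n. clsT fl V E 1 (segT xr ! i) = xs ! i))))"

end

theory Submission
  imports Defs
begin

(* If T has an edge, a 2-simplex of X^G whose two 1-dimensional faces lift to X^T need not
   lift itself. In a 2-simplex of X^T every edge between the two parts runs from a parent in the
   lower layer to a child in the upper one, so a vertex of the first part has at most one
   neighbour in the second. Hence if some vertex m has two children p and q, the path p - m - q
   partitioned as {m}, {p, q} does not lift. Otherwise T is a chain, and two adjacent vertices
   without their edge, partitioned into two singletons, do not lift either, because an admissible
   subforest containing two comparable vertices contains an edge.
   For the one-vertex tree every simplex on either side is rigid, and a partition S_1, ..., S_n
   is the image of exactly one layering, namely L_k = S_(k+1) \<union> ... \<union> S_n. *)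

lemma rooted_tree_edge:
  assumes "rooted_tree V r E" "(u, v) \<in> E"
  shows "u \<in> V" "v \<in> V" "v \<noteq> r"
  using assms unfolding rooted_tree_def by auto

lemma rooted_tree_reachable:
  assumes "rooted_tree V r E" "v \<in> V"
  shows "(r, v) \<in> E\<^sup>*"
  using assms unfolding rooted_tree_def by blast

lemma rooted_tree_unique_parent:
  assumes T: "rooted_tree V r E" and "(u, v) \<in> E" "(u', v) \<in> E"
  shows "u = u'"
proof -
  have "\<exists>!u. (u, v) \<in> E"
    using T rooted_tree_edge[OF T assms(2)] unfolding rooted_tree_def by blast
  then show ?thesis using assms(2,3) by blast
qed

lemma rooted_tree_acyclic:
  assumes T: "rooted_tree V r E"
  shows "acyclic E"
proof (rule acyclicI, intro allI notI)
  fix u assume cycle: "(u, u) \<in> E\<^sup>+"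
  obtain u' where "(u, u') \<in> E" using tranclD[OF cycle] by blast
  then have "(r, u) \<in> E\<^sup>*" using rooted_tree_reachable[OF T] rooted_tree_edge[OF T] by blast
  then show False using cycle
  proof (induction rule: rtrancl_induct)
    case base
    then obtain z where "(z, r) \<in> E" by (blast dest: tranclD2)
    then show False using rooted_tree_edge(3)[OF T] by blast
  next
    case (step a b)
    then obtain b' where "(b, b') \<in> E\<^sup>*" "(b', b) \<in> E" by (blast dest: tranclD2)
    moreover have "b' = a" using rooted_tree_unique_parent[OF T \<open>(b', b) \<in> E\<close> step(2)] .
    ultimately have "(a, a) \<in> E\<^sup>+" using step(2) by (meson rtrancl_into_trancl2)
    then show False by (rule step.IH)
  qed
qed

lemma rooted_tree_antisym:
  assumes "rooted_tree V r E" "(x, y) \<in> E\<^sup>*" "(y, x) \<in> E\<^sup>*"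
  shows "x = y"
  using acyclic_impl_antisym_rtrancl[OF rooted_tree_acyclic[OF assms(1)]] assms(2,3)
  by (rule antisymD)

lemma rooted_tree_no_loop:
  assumes "rooted_tree V r E" shows "(v, v) \<notin> E"
  using rooted_tree_acyclic[OF assms] by (auto simp: acyclic_def)

lemma rooted_tree_siblings_incomparable:
  assumes T: "rooted_tree V r E" and "(m, p) \<in> E" "(m, q) \<in> E" "p \<noteq> q"
  shows "(p, q) \<notin> E\<^sup>*"
proof
  assume "(p, q) \<in> E\<^sup>*"
  then have "(p, q) \<in> E\<^sup>+" using assms(4) by (simp add: rtrancl_eq_or_trancl)
  then obtain z where "(p, z) \<in> E\<^sup>*" "(z, q) \<in> E" by (blast dest: tranclD2)
  moreover have "z = m" using rooted_tree_unique_parent[OF T \<open>(z, q) \<in> E\<close> assms(3)] .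
  ultimately have "m = p" using rooted_tree_antisym[OF T] assms(2) by blast
  then show False using rooted_tree_no_loop[OF T] assms(2) by simp
qed

lemma rooted_tree_chain_comparable:
  assumes T: "rooted_tree V r E" and chain: "\<And>u v w. (u, v) \<in> E \<Longrightarrow> (u, w) \<in> E \<Longrightarrow> v = w"
    and "a \<in> V" "b \<in> V"
  shows "(a, b) \<in> E\<^sup>* \<or> (b, a) \<in> E\<^sup>*"
proof -
  have "(r, a) \<in> E\<^sup>*" "(r, b) \<in> E\<^sup>*" using rooted_tree_reachable[OF T] assms(3,4) by blast+
  then show ?thesis
  proof (induction rule: rtrancl_induct)
    case (step u v)
    then consider "(u, b) \<in> E\<^sup>+" | "u = b" | "(b, u) \<in> E\<^sup>*"
      by (auto simp: rtrancl_eq_or_trancl)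
    then show ?case
    proof cases
      case 1
      then obtain u' where "(u, u') \<in> E" "(u', b) \<in> E\<^sup>*" by (blast dest: tranclD)
      then show ?thesis using chain[OF step(2)] by blast
    qed (use step(2) rtrancl_into_rtrancl[of b u E v] in auto)
  qed simp
qed

section \<open>Layerings and admissible subforests\<close>

lemma lower_sub_of_vertex_set:
  assumes "E \<subseteq> V \<times> V"
  shows "lower_sub E V L \<longleftrightarrow> L \<subseteq> V \<and> (\<forall>w\<in>L. \<forall>v\<in>V. (v, w) \<in> E\<^sup>* \<longrightarrow> v \<in> L)"
proof -
  have "sub_edges E V = E" using assms unfolding sub_edges_def by auto
  then show ?thesis unfolding lower_sub_def forest_le_def by simp
qed

lemma lower_sub_edge:
  assumes "lower_sub E S L" "(v, w) \<in> E" "v \<in> S" "w \<in> S" "w \<in> L"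
  shows "v \<in> L"
proof -
  have "forest_le E S v w" unfolding forest_le_def sub_edges_def using assms(2-4) by auto
  then show ?thesis using assms(1,3,5) unfolding lower_sub_def by blast
qed

lemma lower_sub_no_edges: "lower_sub {} S L \<longleftrightarrow> L \<subseteq> S"
  unfolding lower_sub_def forest_le_def sub_edges_def by auto

lemma layering_subset:
  assumes "layering E S n Ls" "i \<le> n"
  shows "Ls ! i \<subseteq> S"
  using assms unfolding layering_def lower_sub_def by blast

lemma layering_one:
  assumes "layering E S 1 Ls"
  shows "Ls = [S, {}]"
proof -
  have "length Ls = 2" "Ls ! 0 = S" "Ls ! 1 = {}" using assms unfolding layering_def by auto
  then show ?thesis by (intro nth_equalityI) (auto simp: less_2_cases_iff)
qed

lemma layering_two:
  assumes "layering E S 2 Ls"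
  obtains L where "Ls = [S, L, {}]" "lower_sub E S L"
proof
  have "length Ls = 3" "Ls ! 0 = S" "Ls ! 2 = {}" using assms unfolding layering_def by auto
  then show "Ls = [S, Ls ! 1, {}]"
    by (intro nth_equalityI) (auto simp: numeral_3_eq_3 numeral_2_eq_2 less_Suc_eq)
  show "lower_sub E S (Ls ! 1)" using assms unfolding layering_def by simp
qed

lemma admissible_diff:
  assumes "E \<subseteq> V \<times> V" "lower_sub E V A" "lower_sub E V B" "B \<subseteq> A"
  shows "admissible V E (A - B)"
proof -
  have "A \<subseteq> V" using assms(2) unfolding lower_sub_def by blast
  moreover have "lower_sub E V V" "lower_sub E V {}" unfolding lower_sub_def by auto
  ultimately have "layering E V 3 [V, A, B, {}]"
    using assms unfolding layering_def by (auto simp: numeral_3_eq_3 less_Suc_eq le_Suc_eq)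
  then show ?thesis unfolding admissible_def
    by (intro exI[of _ 3] exI[of _ "[V, A, B, {}]"] exI[of _ 1] exI[of _ 2])
      (simp add: numeral_2_eq_2)
qed

lemma admissible_subset:
  assumes "admissible V E S"
  shows "S \<subseteq> V"
proof -
  obtain n Ls i j where "layering E V n Ls" "i \<le> j" "j \<le> n" "S = Ls ! i - Ls ! j"
    using assms unfolding admissible_def by blast
  then show ?thesis using layering_subset[of E V n Ls i] by auto
qed

lemma admissible_antichain:
  assumes T: "rooted_tree V r E" and "P \<subseteq> V"
    and antichain: "\<And>p q. p \<in> P \<Longrightarrow> q \<in> P \<Longrightarrow> (p, q) \<in> E\<^sup>* \<Longrightarrow> p = q"
  shows "admissible V E P"
proof -
  have EV: "E \<subseteq> V \<times> V" using T unfolding rooted_tree_def by simp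
  \<comment> \<open>P is cut out between the lower sets B \<union> P and B, B being the vertices not above P.\<close>
  define B where "B = V - {v. \<exists>p\<in>P. (p, v) \<in> E\<^sup>*}"
  have lower_B: "lower_sub E V B"
    unfolding lower_sub_of_vertex_set[OF EV] B_def by (blast intro: rtrancl_trans)
  have lower_PB: "lower_sub E V (B \<union> P)"
    unfolding lower_sub_of_vertex_set[OF EV]
  proof (intro conjI ballI impI)
    fix w v assume w: "w \<in> B \<union> P" and "v \<in> V" and vw: "(v, w) \<in> E\<^sup>*"
    show "v \<in> B \<union> P"
    proof (cases "v \<in> B")
      case False
      then obtain p where p: "p \<in> P" "(p, v) \<in> E\<^sup>*" using \<open>v \<in> V\<close> B_def by blast
      have "(p, w) \<in> E\<^sup>*" using p(2) vw by (rule rtrancl_trans)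
      then have "w \<in> P" "p = w" using w p antichain unfolding B_def by blast+
      then show ?thesis using rooted_tree_antisym[OF T vw] p by simp
    qed simp
  qed (use assms(2) B_def in blast)
  have "B \<union> P - B = P" unfolding B_def by blast
  then show ?thesis using admissible_diff[OF EV lower_PB lower_B] by auto
qed

lemma admissible_parent:
  assumes EV: "E \<subseteq> V \<times> V" and "admissible V E S" "a \<in> S" "b \<in> S" "(a, b) \<in> E\<^sup>+"
  obtains z where "z \<in> S" "(z, b) \<in> E"
proof -
  obtain n Ls i j where l: "layering E V n Ls" "i \<le> j" "j \<le> n" and S: "S = Ls ! i - Ls ! j"
    using assms(2) unfolding admissible_def by blast
  have li: "lower_sub E V (Ls ! i)" and lj: "lower_sub E V (Ls ! j)"
    using l unfolding layering_def by auto
  obtain z where z: "(a, z) \<in> E\<^sup>*" "(z, b) \<in> E" using tranclD2[OF assms(5)] by blast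
  have "z \<in> V" "a \<in> V" using z(2) EV admissible_subset[OF assms(2)] assms(3) by auto
  then have "z \<in> Ls ! i" "z \<notin> Ls ! j"
    using li lj z assms(3,4) S unfolding lower_sub_of_vertex_set[OF EV] by blast+
  then show thesis using that z(2) S by blast
qed

lemma admissible_single_vertex: "admissible {r} {} S \<longleftrightarrow> S \<subseteq> {r}"
  using admissible_subset admissible_diff[of "{}" "{r}" S "{}"] by (auto simp: lower_sub_no_edges)

definition layer_diffs :: "'v set list \<Rightarrow> 'v set list" where
  "layer_diffs Ls = map (\<lambda>i. Ls ! i - Ls ! Suc i) [0..<length Ls - 1]"

definition suffix_unions :: "'a set list \<Rightarrow> 'a set list" where
  "suffix_unions Ss = map (\<lambda>k. \<Union>j\<in>{k..<length Ss}. Ss ! j) [0..<Suc (length Ss)]"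

lemma length_suffix_unions [simp]: "length (suffix_unions Ss) = Suc (length Ss)"
  unfolding suffix_unions_def by simp

lemma nth_suffix_unions:
  "k \<le> length Ss \<Longrightarrow> suffix_unions Ss ! k = (\<Union>j\<in>{k..<length Ss}. Ss ! j)"
  unfolding suffix_unions_def by (simp del: upt_Suc)

lemma layer_diffs_suffix_unions:
  assumes "\<And>i j. i < length Ss \<Longrightarrow> j < length Ss \<Longrightarrow> i \<noteq> j \<Longrightarrow> Ss ! i \<inter> Ss ! j = {}"
  shows "layer_diffs (suffix_unions Ss) = Ss"
proof (rule nth_equalityI)
  fix i assume "i < length (layer_diffs (suffix_unions Ss))"
  then have i: "i < length Ss" unfolding layer_diffs_def by simp
  have "{i..<length Ss} = insert i {Suc i..<length Ss}" using i by auto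
  then have "suffix_unions Ss ! i = Ss ! i \<union> suffix_unions Ss ! Suc i"
    using i by (simp add: nth_suffix_unions)
  moreover have "Ss ! i \<inter> Ss ! j = {}" if "j \<in> {Suc i..<length Ss}" for j
    using assms[of i j] i that by auto
  then have "Ss ! i \<inter> suffix_unions Ss ! Suc i = {}"
    using i by (force simp: nth_suffix_unions)
  ultimately show "layer_diffs (suffix_unions Ss) ! i = Ss ! i"
    using i unfolding layer_diffs_def by auto
qed (simp add: layer_diffs_def)

lemma suffix_unions_layer_diffs:
  assumes len: "length L = Suc n" and last: "L ! n = {}" and dec: "\<And>i. i < n \<Longrightarrow> L ! Suc i \<subseteq> L ! i"
  shows "suffix_unions (layer_diffs L) = L"
proof (rule nth_equalityI)
  have diffs: "length (layer_diffs L) = n" "\<And>j. j < n \<Longrightarrow> layer_diffs L ! j = L ! j - L ! Suc j"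
    using len unfolding layer_diffs_def by auto
  fix k assume "k < length (suffix_unions (layer_diffs L))"
  then have "k \<le> n" using diffs by simp
  then have "L ! k = (\<Union>j\<in>{k..<n}. L ! j - L ! Suc j)"
  proof (induction rule: inc_induct)
    case (step i)
    have "{i..<n} = insert i {Suc i..<n}" using step.hyps by auto
    then show ?case using step dec[of i] by auto
  qed (simp add: last)
  then show "suffix_unions (layer_diffs L) ! k = L ! k"
    using \<open>k \<le> n\<close> diffs by (simp add: nth_suffix_unions)
qed (simp add: len layer_diffs_def)

type_synonym 'v graph_simplex = "'v set \<times> 'v set set \<times> 'v set list"

definition graph_iso :: "('v \<Rightarrow> 'v) \<Rightarrow> 'v graph_simplex \<Rightarrow> 'v graph_simplex \<Rightarrow> bool" where
  "graph_iso f y y' \<longleftrightarrow> (case y of (VH, EH, Ss) \<Rightarrow> case y' of (VH', EH', Ss') \<Rightarrow>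
     bij_betw f VH VH' \<and> (\<lambda>e. f ` e) ` EH = EH' \<and> length Ss = length Ss' \<and>
     (\<forall>i<length Ss. f ` (Ss ! i) = Ss' ! i))"

definition wf_graph_simplex :: "'v graph_simplex \<Rightarrow> bool" where
  "wf_graph_simplex y \<longleftrightarrow> (case y of (VH, EH, Ss) \<Rightarrow> (\<forall>e\<in>EH. e \<subseteq> VH) \<and> (\<forall>A\<in>set Ss. A \<subseteq> VH))"

lemma isoG_iff_graph_iso: "isoG fl y y' \<longleftrightarrow> (if fl = Labelled then y = y' else \<exists>f. graph_iso f y y')"
  unfolding isoG_def graph_iso_def by (cases y; cases y'; simp)

lemma graph_iso_id: "graph_iso id y y"
  unfolding graph_iso_def by (cases y) auto

lemma graph_iso_comp:
  assumes "graph_iso f y y'" "graph_iso g y' y''"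
  shows "graph_iso (g \<circ> f) y y''"
proof -
  obtain VH EH Ss VH' EH' Ss' VH'' EH'' Ss'' where
    y: "y = (VH, EH, Ss)" "y' = (VH', EH', Ss')" "y'' = (VH'', EH'', Ss'')"
    by (cases y; cases y'; cases y'') auto
  from assms have bij: "bij_betw f VH VH'" "bij_betw g VH' VH''"
    and edges: "(\<lambda>e. f ` e) ` EH = EH'" "(\<lambda>e. g ` e) ` EH' = EH''"
    and len: "length Ss = length Ss'" "length Ss' = length Ss''"
    and parts: "\<forall>i<length Ss. f ` (Ss ! i) = Ss' ! i" "\<forall>i<length Ss'. g ` (Ss' ! i) = Ss'' ! i"
    unfolding graph_iso_def y by auto
  have "(g \<circ> f) ` (Ss ! i) = Ss'' ! i" if "i < length Ss" for i
    unfolding image_comp[symmetric] using that parts len by simp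
  moreover have "(\<lambda>e. (g \<circ> f) ` e) ` EH = EH''"
    unfolding edges(2)[symmetric] edges(1)[symmetric] by (simp add: image_image image_comp)
  ultimately show ?thesis using bij_betw_trans[OF bij] len unfolding graph_iso_def y by simp
qed

lemma graph_iso_inv:
  assumes "graph_iso f y y'" "wf_graph_simplex y"
  shows "graph_iso (inv_into (fst y) f) y' y"
proof -
  obtain VH EH Ss VH' EH' Ss' where y: "y = (VH, EH, Ss)" and y': "y' = (VH', EH', Ss')"
    by (cases y; cases y') auto
  from assms have bij: "bij_betw f VH VH'" and edges: "(\<lambda>e. f ` e) ` EH = EH'"
    and len: "length Ss = length Ss'" and parts: "\<forall>i<length Ss. f ` (Ss ! i) = Ss' ! i"
    and wf: "\<forall>e\<in>EH. e \<subseteq> VH" "\<forall>A\<in>set Ss. A \<subseteq> VH"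
    unfolding graph_iso_def wf_graph_simplex_def y y' by auto
  let ?g = "inv_into VH f"
  have inj: "inj_on f VH" using bij bij_betw_def by blast
  have cancel: "?g ` f ` A = A" if "A \<subseteq> VH" for A
    using inv_into_image_cancel[OF inj that] .
  have "(\<lambda>e. ?g ` e) ` EH' = ((\<lambda>e. ?g ` e) \<circ> (\<lambda>e. f ` e)) ` EH"
    unfolding edges[symmetric] by (rule image_comp)
  also have "\<dots> = id ` EH" by (rule image_cong) (use cancel wf(1) in auto)
  finally have "(\<lambda>e. ?g ` e) ` EH' = EH" by simp
  moreover have "\<forall>i<length Ss'. ?g ` (Ss' ! i) = Ss ! i"
    using parts len cancel wf(2) by (metis nth_mem)
  ultimately show ?thesis
    using bij_betw_inv_into[OF bij] len unfolding graph_iso_def y y' by simp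
qed

lemma graph_iso_fixing_eq:
  assumes "graph_iso f y y'" "wf_graph_simplex y" "\<forall>v\<in>fst y. f v = v"
  shows "y = y'"
proof -
  obtain VH EH Ss VH' EH' Ss' where y: "y = (VH, EH, Ss)" and y': "y' = (VH', EH', Ss')"
    by (cases y; cases y') auto
  have fixed: "f ` A = A" if "A \<subseteq> VH" for A
  proof -
    have "f ` A = id ` A" using assms(3) that unfolding y by (intro image_cong) auto
    then show ?thesis by simp
  qed
  from assms have "bij_betw f VH VH'" "(\<lambda>e. f ` e) ` EH = EH'"
    "length Ss = length Ss'" "\<forall>i<length Ss. f ` (Ss ! i) = Ss' ! i"
    "\<forall>e\<in>EH. e \<subseteq> VH" "\<forall>A\<in>set Ss. A \<subseteq> VH"
    unfolding graph_iso_def wf_graph_simplex_def y y' by auto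
  then show ?thesis unfolding y y' using fixed
    by (auto simp: bij_betw_def intro!: nth_equalityI)
qed

lemma isoG_refl: "isoG fl y y"
  unfolding isoG_iff_graph_iso using graph_iso_id[of y] by auto

lemma isoG_trans: "isoG fl y y' \<Longrightarrow> isoG fl y' y'' \<Longrightarrow> isoG fl y y''"
  unfolding isoG_iff_graph_iso by (auto split: if_splits intro: graph_iso_comp)

lemma isoG_sym: "isoG fl y y' \<Longrightarrow> wf_graph_simplex y \<Longrightarrow> isoG fl y' y"
  unfolding isoG_iff_graph_iso by (auto split: if_splits intro: graph_iso_inv)

lemma isoG_imp_graph_iso: "isoG fl y y' \<Longrightarrow> \<exists>f. graph_iso f y y'"
  unfolding isoG_iff_graph_iso using graph_iso_id[of y] by (auto split: if_splits)

lemma clsG_eq_if_isoG: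
  assumes "isoG fl y y'" "wf_graph_simplex y"
  shows "clsG fl V E n y = clsG fl V E n y'"
  unfolding clsG_def using isoG_trans isoG_sym[OF assms] assms(1) by blast

lemma repG_wf: "repG V E n y \<Longrightarrow> wf_graph_simplex y"
  unfolding repG_def wf_graph_simplex_def by (cases y) auto

lemma segG_nth:
  "i < length Ss \<Longrightarrow> segG (VH, EH, Ss) ! i = (Ss ! i, {e\<in>EH. e \<subseteq> Ss ! i}, [Ss ! i])"
  unfolding segG_def by simp

lemma graph_iso_segG:
  assumes iso: "graph_iso f (VH, EH, Ss) (VH', EH', Ss')" and wf: "wf_graph_simplex (VH, EH, Ss)"
    and i: "i < length Ss"
  shows "graph_iso f (segG (VH, EH, Ss) ! i) (segG (VH', EH', Ss') ! i)"
proof -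
  from assms have bij: "bij_betw f VH VH'" and edges: "(\<lambda>e. f ` e) ` EH = EH'"
    and len: "length Ss = length Ss'" and part: "f ` (Ss ! i) = Ss' ! i"
    and wf_edges: "\<forall>e\<in>EH. e \<subseteq> VH" and part_sub: "Ss ! i \<subseteq> VH"
    unfolding graph_iso_def wf_graph_simplex_def by auto
  have inj: "inj_on f VH" using bij bij_betw_def by blast
  have "f ` e \<subseteq> Ss' ! i \<longleftrightarrow> e \<subseteq> Ss ! i" if "e \<in> EH" for e
  proof -
    have "e \<subseteq> VH" using wf_edges that by blast
    then show ?thesis
      unfolding part[symmetric] using inj_on_image_mem_iff[OF inj _ part_sub] by blast
  qed
  then have "(\<lambda>e. f ` e) ` {e\<in>EH. e \<subseteq> Ss ! i} = {e\<in>EH'. e \<subseteq> Ss' ! i}"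
    unfolding edges[symmetric] by blast
  moreover have "bij_betw f (Ss ! i) (Ss' ! i)" using bij_betw_subset[OF bij part_sub part] .
  ultimately show ?thesis using i len part unfolding graph_iso_def by (simp add: segG_nth)
qed

lemma isoG_segG:
  assumes "isoG fl y y'" "wf_graph_simplex y" "i < length (snd (snd y))"
  shows "isoG fl (segG y ! i) (segG y' ! i)"
  using assms
    graph_iso_segG[of _ "fst y" "fst (snd y)" "snd (snd y)" "fst y'" "fst (snd y')" "snd (snd y')" i]
  unfolding isoG_iff_graph_iso by (auto split: if_splits)

lemma Umap_eq: "Umap E (S, Ls) = (S, gedges (sub_edges E S), layer_diffs Ls)"
  unfolding Umap_def layer_diffs_def by simp

lemma fst_Umap [simp]: "fst (Umap E x) = fst x"
  unfolding Umap_def by (simp split: prod.splits)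

lemma Umap_one: "Umap E (S, [S, {}]) = (S, gedges (sub_edges E S), [S])"
  unfolding Umap_eq layer_diffs_def by simp

lemma Umap_two: "Umap E (S, [S, L, {}]) = (S, gedges (sub_edges E S), [S - L, L])"
  unfolding Umap_eq layer_diffs_def by (simp add: numeral_2_eq_2)

lemma segT_nth:
  "i < length Ls - 1 \<Longrightarrow> segT (S, Ls) ! i = (layer_diffs Ls ! i, [layer_diffs Ls ! i, {}])"
  unfolding segT_def layer_diffs_def by simp

lemma repT_one_intro: "admissible V E S \<Longrightarrow> repT V E 1 (S, [S, {}])"
  unfolding repT_def layering_def lower_sub_def by (auto simp: le_Suc_eq)

lemma repT_oneE:
  assumes "repT V E 1 x"
  obtains S where "x = (S, [S, {}])" "admissible V E S"
  using assms layering_one unfolding repT_def by (metis prod.collapse)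

lemma repT_twoE:
  assumes "repT V E 2 x"
  obtains S L where "x = (S, [S, L, {}])" "admissible V E S" "lower_sub E S L"
proof -
  obtain S Ls where "x = (S, Ls)" "admissible V E S" "layering E S 2 Ls"
    using assms unfolding repT_def by (cases x) auto
  with layering_two[of E S Ls] that show thesis by blast
qed

lemma repT_fst_subset: "repT V E n x \<Longrightarrow> fst x \<subseteq> V"
  unfolding repT_def using admissible_subset by blast

lemma repG_Umap_one: "admissible V E S \<Longrightarrow> repG V E 1 (Umap E (S, [S, {}]))"
  using admissible_subset unfolding Umap_one repG_def gedges_def sub_edges_def by fastforce

lemma repG_segG:
  assumes "repG V E n (VH, EH, Ss)" "i < n"
  shows "repG V E 1 (segG (VH, EH, Ss) ! i)"
proof -
  have "Ss ! i \<in> set Ss" using assms unfolding repG_def by simp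
  then show ?thesis using assms unfolding repG_def by (fastforce simp: segG_nth)
qed

lemma repG_two:
  assumes "A \<subseteq> V" "B \<subseteq> V" "A \<inter> B = {}" "EH \<subseteq> gedges E" "\<forall>e\<in>EH. e \<subseteq> A \<union> B"
  shows "repG V E 2 (A \<union> B, EH, [A, B])"
  using assms unfolding repG_def by (auto simp: less_2_cases_iff)

lemma isoT_refl: "isoT fl E x x"
  unfolding isoT_def forest_iso_def by (auto intro!: exI[of _ id])

lemma clsT_in_XT: "repT V E n x \<Longrightarrow> clsT fl V E n x \<in> XT fl V E n"
  unfolding XT_def by blast

lemma gedges_sub_edges_image:
  assumes "forest_iso fl E f S S'"
  shows "(\<lambda>e. f ` e) ` gedges (sub_edges E S) = gedges (sub_edges E S')"
proof -
  have im: "f ` S = S'" and edge: "\<forall>v\<in>S. \<forall>w\<in>S. (v, w) \<in> E \<longleftrightarrow> (f v, f w) \<in> E"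
    using assms unfolding forest_iso_def bij_betw_def by auto
  have "gedges (sub_edges E S') = {{f v, f w} | v w. (v, w) \<in> E \<and> v \<in> S \<and> w \<in> S}"
    unfolding gedges_def sub_edges_def im[symmetric] using edge by blast
  also have "\<dots> = (\<lambda>e. f ` e) ` gedges (sub_edges E S)"
    unfolding gedges_def sub_edges_def by (auto simp: image_iff) (metis image_empty image_insert)
  finally show ?thesis by simp
qed

lemma gedges_sub_edges_eq_empty_iff:
  "gedges (sub_edges E A) = {} \<longleftrightarrow> (\<forall>v\<in>A. \<forall>w\<in>A. (v, w) \<notin> E)"
  unfolding gedges_def sub_edges_def by auto

lemma segG_eq_Umap_one:
  assumes "i < length Ss" "Ss ! i = A" "{e\<in>EH. e \<subseteq> A} = gedges (sub_edges E A)"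
  shows "segG (VH, EH, Ss) ! i = Umap E (A, [A, {}])"
  using assms by (simp add: segG_nth Umap_one)

lemma wf_Umap:
  assumes "repT V E n x"
  shows "wf_graph_simplex (Umap E x)"
proof -
  obtain S Ls where x: "x = (S, Ls)" and lay: "layering E S n Ls"
    using assms unfolding repT_def by (cases x) auto
  have "length Ls = Suc n" "\<forall>i<n. Ls ! i \<subseteq> S"
    using lay layering_subset[OF lay] unfolding layering_def by auto
  then have "\<forall>A\<in>set (layer_diffs Ls). A \<subseteq> S"
    unfolding layer_diffs_def by auto
  then show ?thesis
    unfolding x Umap_eq wf_graph_simplex_def gedges_def sub_edges_def by auto
qed

lemma isoG_Umap:
  assumes rep: "repT V E n x" and iso: "isoT fl E x x'"
  shows "isoG fl (Umap E x) (Umap E x')"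
proof (cases "fl = Labelled")
  case True
  then show ?thesis using iso isoG_refl unfolding isoT_def by simp
next
  case False
  obtain S Ls S' Ls' where x: "x = (S, Ls)" "x' = (S', Ls')" by (cases x; cases x') auto
  obtain f where fi: "forest_iso fl E f S S'" and len: "length Ls = length Ls'"
    and layers: "\<forall>i<length Ls. f ` (Ls ! i) = Ls' ! i"
    using iso False unfolding isoT_def x by auto
  have bij: "bij_betw f S S'" using fi unfolding forest_iso_def by simp
  have lay: "layering E S n Ls" using rep unfolding repT_def x by simp
  then have sub: "Ls ! i \<subseteq> S" if "i < length Ls" for i
    using layering_subset[OF lay] that unfolding layering_def by simp
  have "f ` (Ls ! i - Ls ! Suc i) = Ls' ! i - Ls' ! Suc i" if "i < length Ls - 1" for i
  proof -
    have "i < length Ls" "Suc i < length Ls" using that by auto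
    then show ?thesis
      using inj_on_image_set_diff[OF bij_betw_imp_inj_on[OF bij], of "Ls ! i" "Ls ! Suc i"]
        sub[of i] sub[of "Suc i"] layers by auto
  qed
  then have "graph_iso f (Umap E x) (Umap E x')"
    using bij len gedges_sub_edges_image[OF fi]
    unfolding graph_iso_def x Umap_eq layer_diffs_def by simp
  then show ?thesis using False unfolding isoG_iff_graph_iso by auto
qed

lemma Umap_inj_on_repT:
  assumes "repT V E n x" "repT V E n x'" "Umap E x = Umap E x'"
  shows "x = x'"
proof -
  obtain S Ls S' Ls' where x: "x = (S, Ls)" "x' = (S', Ls')" by (cases x; cases x') auto
  have "layering E S n Ls" "layering E S' n Ls'" using assms(1,2) unfolding repT_def x by simp_all
  then have "suffix_unions (layer_diffs Ls) = Ls" "suffix_unions (layer_diffs Ls') = Ls'"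
    unfolding layering_def by (auto intro!: suffix_unions_layer_diffs)
  moreover have "S = S'" "layer_diffs Ls = layer_diffs Ls'"
    using assms(3) unfolding x Umap_eq by simp_all
  ultimately show ?thesis unfolding x by metis
qed

lemma clsG_segG_eq_clsG_Umap:
  assumes "repG V E n y" "repT V E 1 x" "i < n" "segG y ! i = Umap E x"
    and "y' \<in> clsG fl V E n y" "x' \<in> clsT fl V E 1 x"
  shows "clsG fl V E 1 (segG y' ! i) = clsG fl V E 1 (Umap E x')"
proof -
  have wf: "wf_graph_simplex y" using repG_wf[OF assms(1)] .
  have "i < length (snd (snd y))" using assms(1,3) unfolding repG_def by (cases y) auto
  then have iso_seg: "isoG fl (segG y ! i) (segG y' ! i)"
    using isoG_segG[OF _ wf] assms(5) unfolding clsG_def by blast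
  have iso_U: "isoG fl (Umap E x) (Umap E x')"
    using isoG_Umap[OF assms(2)] assms(6) unfolding clsT_def by blast
  have "clsG fl V E 1 (segG y' ! i) = clsG fl V E 1 (segG y ! i)"
    using clsG_eq_if_isoG[OF iso_seg] wf_Umap[OF assms(2)] assms(4) by simp
  also have "\<dots> = clsG fl V E 1 (Umap E x')"
    using clsG_eq_if_isoG[OF iso_U wf_Umap[OF assms(2)]] assms(4) by simp
  finally show ?thesis .
qed

lemma rel_segal_lift:
  assumes seg: "rel_segal fl V E" and n: "2 \<le> n" and y: "repG V E n y"
    and len: "length xs = n"
    and xs: "\<And>i. i < n \<Longrightarrow> repT V E 1 (xs ! i) \<and> segG y ! i = Umap E (xs ! i)"
  obtains x where "repT V E n x" "isoG fl (Umap E x) y"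
proof -
  let ?ys = "clsG fl V E n y" and ?xs = "map (clsT fl V E 1) xs"
  have ys: "?ys \<in> XG fl V E n" unfolding XG_def using y by blast
  have xs_in: "\<forall>i<n. ?xs ! i \<in> XT fl V E 1" using xs len by (simp add: clsT_in_XT)
  have compat: "\<forall>i<n. \<forall>yr\<in>?ys. \<forall>xr\<in>?xs ! i.
      clsG fl V E 1 (segG yr ! i) = clsG fl V E 1 (Umap E xr)"
  proof (intro allI impI ballI)
    fix i yr xr assume "i < n" "yr \<in> ?ys" "xr \<in> ?xs ! i"
    then show "clsG fl V E 1 (segG yr ! i) = clsG fl V E 1 (Umap E xr)"
      using xs[of i] len by (intro clsG_segG_eq_clsG_Umap[OF y, of "xs ! i"]) simp_all
  qed
  have "\<exists>!c. c \<in> XT fl V E n \<and> (\<forall>xr\<in>c. clsG fl V E n (Umap E xr) = ?ys \<and>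
      (\<forall>i<n. clsT fl V E 1 (segT xr ! i) = ?xs ! i))"
    by (rule seg[unfolded rel_segal_def, rule_format, OF n ys, of ?xs])
      (use len xs_in compat in simp)
  then obtain c where "c \<in> XT fl V E n" and c: "\<forall>xr\<in>c. clsG fl V E n (Umap E xr) = ?ys"
    by (meson ex1_implies_ex)
  then obtain x where x: "repT V E n x" "c = clsT fl V E n x" unfolding XT_def by blast
  then have "x \<in> c" using isoT_refl unfolding clsT_def by blast
  then have "y \<in> clsG fl V E n (Umap E x)"
    using c y isoG_refl unfolding clsG_def by blast
  then show thesis using that x(1) unfolding clsG_def by blast
qed

lemma rel_segal_lift_two:
  assumes "rel_segal fl V E" "repG V E 2 y" "admissible V E A" "admissible V E B"
    "segG y ! 0 = Umap E (A, [A, {}])" "segG y ! 1 = Umap E (B, [B, {}])"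
  obtains x where "repT V E 2 x" "isoG fl (Umap E x) y"
proof (rule rel_segal_lift[OF assms(1) order_refl assms(2), of "[(A, [A, {}]), (B, [B, {}])]"])
  fix i :: nat assume "i < 2"
  then show "repT V E 1 ([(A, [A, {}]), (B, [B, {}])] ! i) \<and>
      segG y ! i = Umap E ([(A, [A, {}]), (B, [B, {}])] ! i)"
    using assms(3-6) repT_one_intro by (auto simp: less_2_cases_iff)
qed (use that in simp_all)

lemma graph_iso_from_Umap_two:
  assumes "repT V E 2 x" "isoG fl (Umap E x) (W, EH, [A, B])"
  obtains S L g where "admissible V E S" "lower_sub E S L" "bij_betw g W S"
    "(\<lambda>e. g ` e) ` EH = gedges (sub_edges E S)" "g ` A = S - L" "g ` B = L"
proof -
  obtain S L where x: "x = (S, [S, L, {}])" "admissible V E S" "lower_sub E S L"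
    using repT_twoE[OF assms(1)] .
  have "isoG fl (W, EH, [A, B]) (S, gedges (sub_edges E S), [S - L, L])"
    using isoG_sym[OF assms(2) wf_Umap[OF assms(1)]] unfolding x Umap_two .
  then obtain g where "graph_iso g (W, EH, [A, B]) (S, gedges (sub_edges E S), [S - L, L])"
    using isoG_imp_graph_iso by blast
  then have g: "bij_betw g W S" "(\<lambda>e. g ` e) ` EH = gedges (sub_edges E S)"
    "\<forall>i<2. g ` ([A, B] ! i) = [S - L, L] ! i"
    unfolding graph_iso_def by simp_all
  moreover have "g ` A = S - L" "g ` B = L"
    using g(3)[rule_format, of 0] g(3)[rule_format, of 1] by simp_all
  ultimately show thesis by (intro that[OF x(2,3)])
qed

section \<open>Trees with an edge\<close>

lemma edge_from_lower_layer:
  assumes "lower_sub E S L" "{v, w} \<in> gedges (sub_edges E S)" "v \<in> L" "w \<in> S - L"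
  shows "(v, w) \<in> E"
proof -
  obtain a b where ab: "{v, w} = {a, b}" "(a, b) \<in> E" "a \<in> S" "b \<in> S"
    using assms(2) unfolding gedges_def sub_edges_def by blast
  have "b \<noteq> v \<or> a \<in> L" using lower_sub_edge[OF assms(1) ab(2-4)] assms(3) by blast
  then show ?thesis using ab assms(3,4) by (auto simp: doubleton_eq_iff)
qed

lemma upper_vertex_unique_lower_neighbour:
  assumes "rooted_tree V r E" "lower_sub E S L" "w \<in> S - L" "v \<in> L" "v' \<in> L"
    "{v, w} \<in> gedges (sub_edges E S)" "{v', w} \<in> gedges (sub_edges E S)"
  shows "v = v'"
  using rooted_tree_unique_parent[OF assms(1)] edge_from_lower_layer[OF assms(2)] assms(3-7)
  by blast

lemma admissible_chain_edgeless:
  assumes T: "rooted_tree V r E" and chain: "\<And>u v w. (u, v) \<in> E \<Longrightarrow> (u, w) \<in> E \<Longrightarrow> v = w"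
    and S: "admissible V E S" "gedges (sub_edges E S) = {}" and "a \<in> S" "b \<in> S"
  shows "a = b"
proof (rule ccontr)
  assume "a \<noteq> b"
  have EV: "E \<subseteq> V \<times> V" using T unfolding rooted_tree_def by simp
  have "a \<in> V" "b \<in> V" using admissible_subset[OF S(1)] assms(5,6) by auto
  with chain have "(a, b) \<in> E\<^sup>* \<or> (b, a) \<in> E\<^sup>*" by (rule rooted_tree_chain_comparable[OF T])
  then have "(a, b) \<in> E\<^sup>+ \<or> (b, a) \<in> E\<^sup>+" using \<open>a \<noteq> b\<close> by (auto simp: rtrancl_eq_or_trancl)
  then obtain u w where "u \<in> S" "w \<in> S" "(u, w) \<in> E\<^sup>+" using assms(5,6) by blast
  then obtain z where "z \<in> S" "(z, w) \<in> E" using admissible_parent[OF EV S(1)] by blast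
  then have "{z, w} \<in> gedges (sub_edges E S)"
    using \<open>w \<in> S\<close> unfolding gedges_def sub_edges_def by blast
  then show False using S(2) by simp
qed

lemma not_rel_segal_if_fork:
  assumes T: "rooted_tree V r E" and mp: "(m, p) \<in> E" and mq: "(m, q) \<in> E" and "p \<noteq> q"
  shows "\<not> rel_segal fl V E"
proof
  assume seg: "rel_segal fl V E"
  have V: "m \<in> V" "p \<in> V" "q \<in> V" using rooted_tree_edge[OF T] mp mq by blast+
  have no_loop: "(v, v) \<notin> E" for v using rooted_tree_no_loop[OF T] .
  have "m \<noteq> p" "m \<noteq> q" using mp mq no_loop by auto
  have siblings: "(p, q) \<notin> E\<^sup>*" "(q, p) \<notin> E\<^sup>*"
    using rooted_tree_siblings_incomparable[OF T] mp mq \<open>p \<noteq> q\<close> by blast+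
  then have "(p, q) \<notin> E" "(q, p) \<notin> E" by auto
  \<comment> \<open>Both parts of p - m - q split as {m}, {p, q} lift, but in a lift of the whole, m would have two parents.\<close>
  let ?EH = "{{p, m}, {m, q}}"
  have "?EH \<subseteq> gedges E" unfolding gedges_def using mp mq by (auto simp: doubleton_eq_iff)
  then have y: "repG V E 2 ({m} \<union> {p, q}, ?EH, [{m}, {p, q}])"
    using V \<open>m \<noteq> p\<close> \<open>m \<noteq> q\<close> by (intro repG_two) auto
  have "gedges (sub_edges E {m}) = {}" "gedges (sub_edges E {p, q}) = {}"
    using no_loop \<open>(p, q) \<notin> E\<close> \<open>(q, p) \<notin> E\<close> by (auto simp: gedges_sub_edges_eq_empty_iff)
  then have seg0: "segG ({m} \<union> {p, q}, ?EH, [{m}, {p, q}]) ! 0 = Umap E ({m}, [{m}, {}])"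
    and seg1: "segG ({m} \<union> {p, q}, ?EH, [{m}, {p, q}]) ! 1 = Umap E ({p, q}, [{p, q}, {}])"
    using \<open>m \<noteq> p\<close> \<open>m \<noteq> q\<close> by (auto intro!: segG_eq_Umap_one)
  have "admissible V E {m}" "admissible V E {p, q}"
    using V siblings by (auto intro!: admissible_antichain[OF T])
  then obtain x where "repT V E 2 x" "isoG fl (Umap E x) ({m} \<union> {p, q}, ?EH, [{m}, {p, q}])"
    using rel_segal_lift_two[OF seg y _ _ seg0 seg1] by blast
  then obtain S L g where L: "lower_sub E S L" and bij: "bij_betw g ({m} \<union> {p, q}) S"
    and edges: "(\<lambda>e. g ` e) ` ?EH = gedges (sub_edges E S)"
    and layers: "g ` {m} = S - L" "g ` {p, q} = L"
    by (rule graph_iso_from_Umap_two)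
  have "{g p, g m} \<in> gedges (sub_edges E S)" "{g q, g m} \<in> gedges (sub_edges E S)"
    using edges[symmetric] by auto
  moreover have "g m \<in> S - L" unfolding layers(1)[symmetric] by simp
  moreover have "g p \<in> L" "g q \<in> L" unfolding layers(2)[symmetric] by simp_all
  ultimately have "g p = g q" by (rule upper_vertex_unique_lower_neighbour[OF T L, rotated 3])
  then have "p = q" by (rule inj_onD[OF bij_betw_imp_inj_on[OF bij]]) simp_all
  then show False using \<open>p \<noteq> q\<close> by contradiction
qed

lemma not_rel_segal_if_chain:
  assumes T: "rooted_tree V r E" and chain: "\<And>u v w. (u, v) \<in> E \<Longrightarrow> (u, w) \<in> E \<Longrightarrow> v = w"
    and ab: "(a, b) \<in> E"
  shows "\<not> rel_segal fl V E"
proof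
  assume seg: "rel_segal fl V E"
  have V: "a \<in> V" "b \<in> V" using rooted_tree_edge[OF T ab] by blast+
  have "a \<noteq> b" using ab rooted_tree_no_loop[OF T] by auto
  \<comment> \<open>Both parts of the edgeless graph on a, b lift, but a chain has no edgeless admissible pair.\<close>
  have y: "repG V E 2 ({a} \<union> {b}, {}, [{a}, {b}])"
    using V \<open>a \<noteq> b\<close> by (intro repG_two) auto
  have "admissible V E {a}" "admissible V E {b}"
    using V by (auto intro!: admissible_antichain[OF T])
  moreover have "gedges (sub_edges E {a}) = {}" "gedges (sub_edges E {b}) = {}"
    using rooted_tree_no_loop[OF T] by (auto simp: gedges_sub_edges_eq_empty_iff)
  then have "segG ({a} \<union> {b}, {}, [{a}, {b}]) ! 0 = Umap E ({a}, [{a}, {}])"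
    "segG ({a} \<union> {b}, {}, [{a}, {b}]) ! 1 = Umap E ({b}, [{b}, {}])"
    by (auto intro!: segG_eq_Umap_one)
  ultimately obtain x where "repT V E 2 x" "isoG fl (Umap E x) ({a} \<union> {b}, {}, [{a}, {b}])"
    using rel_segal_lift_two[OF seg y] by metis
  then obtain S L g where "admissible V E S" and bij: "bij_betw g ({a} \<union> {b}) S"
    and "(\<lambda>e. g ` e) ` {} = gedges (sub_edges E S)"
    by (rule graph_iso_from_Umap_two)
  moreover have "g a \<in> S" "g b \<in> S" using bij_betwE[OF bij] by simp_all
  ultimately have "g a = g b" using admissible_chain_edgeless[OF T chain] by simp
  then have "a = b" by (rule inj_onD[OF bij_betw_imp_inj_on[OF bij]]) simp_all
  then show False using \<open>a \<noteq> b\<close> by contradiction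
qed

lemma not_rel_segal_if_nontrivial:
  assumes T: "rooted_tree V r E" and "card V \<noteq> 1"
  shows "\<not> rel_segal fl V E"
proof -
  have "r \<in> V" using T unfolding rooted_tree_def by simp
  moreover have "V \<noteq> {r}" using assms(2) by auto
  ultimately obtain v where "v \<in> V" "v \<noteq> r" by blast
  then have "(r, v) \<in> E\<^sup>+" using rooted_tree_reachable[OF T] by (auto simp: rtrancl_eq_or_trancl)
  then obtain c where "(r, c) \<in> E" by (blast dest: tranclD)
  show ?thesis
  proof (cases "\<exists>m p q. (m, p) \<in> E \<and> (m, q) \<in> E \<and> p \<noteq> q")
    case True
    then show ?thesis using not_rel_segal_if_fork[OF T] by blast
  next
    case False
    then show ?thesis using not_rel_segal_if_chain[OF T _ \<open>(r, c) \<in> E\<close>] by blast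
  qed
qed

section \<open>The one-vertex tree\<close>

lemma bij_betw_subsets_of_singleton:
  "bij_betw f S S' \<Longrightarrow> S \<subseteq> {r} \<Longrightarrow> S' \<subseteq> {r} \<Longrightarrow> v \<in> S \<Longrightarrow> f v = v"
  using bij_betwE by fastforce

lemma isoG_single_vertex:
  assumes "isoG fl y y'" "wf_graph_simplex y" "fst y \<subseteq> {r}" "fst y' \<subseteq> {r}"
  shows "y = y'"
proof -
  obtain f where f: "graph_iso f y y'" using isoG_imp_graph_iso[OF assms(1)] by blast
  then have "bij_betw f (fst y) (fst y')" unfolding graph_iso_def by (auto split: prod.splits)
  then have "\<forall>v\<in>fst y. f v = v" using bij_betw_subsets_of_singleton assms(3,4) by metis
  then show ?thesis using graph_iso_fixing_eq[OF f assms(2)] by simp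
qed

lemma clsG_single_vertex:
  assumes "repG {r} E n y"
  shows "clsG fl {r} E n y = {y}"
proof -
  have "y' = y" if "repG {r} E n y'" "isoG fl y y'" for y'
    using isoG_single_vertex[OF that(2) repG_wf[OF assms]] assms that(1)
    unfolding repG_def by (cases y; cases y') auto
  then show ?thesis using assms isoG_refl unfolding clsG_def by blast
qed

lemma isoT_single_vertex:
  assumes "repT {r} E n x" "repT {r} E n x'" "isoT fl E x x'"
  shows "x = x'"
proof (cases "fl = Labelled")
  case True
  then show ?thesis using assms(3) unfolding isoT_def by simp
next
  case False
  obtain S Ls S' Ls' where x: "x = (S, Ls)" "x' = (S', Ls')" by (cases x; cases x') auto
  obtain f where bij: "bij_betw f S S'" and len: "length Ls = length Ls'"
    and layers: "\<forall>i<length Ls. f ` (Ls ! i) = Ls' ! i"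
    using assms(3) False unfolding isoT_def forest_iso_def x by auto
  have S: "S \<subseteq> {r}" "S' \<subseteq> {r}" and lay: "layering E S n Ls"
    using assms(1,2) admissible_subset unfolding repT_def x by auto
  then have fixed: "f ` A = A" if "A \<subseteq> S" for A
    using bij_betw_subsets_of_singleton[OF bij S] that by (simp add: subset_eq)
  have "S' = S" using fixed[of S] bij unfolding bij_betw_def by simp
  moreover have "Ls' = Ls"
  proof (rule nth_equalityI)
    fix i assume "i < length Ls'"
    then have "Ls' ! i = f ` (Ls ! i)" using layers len by simp
    also have "\<dots> = Ls ! i"
      using fixed layering_subset[OF lay] len lay \<open>i < length Ls'\<close> unfolding layering_def by simp
    finally show "Ls' ! i = Ls ! i" .
  qed (use len in simp)
  ultimately show ?thesis unfolding x by simp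
qed

lemma clsT_single_vertex:
  assumes "repT {r} E n x"
  shows "clsT fl {r} E n x = {x}"
  using isoT_single_vertex[OF assms] assms isoT_refl unfolding clsT_def by blast

lemma suffix_unions_lift_single_vertex:
  assumes y: "repG {r} {} n (VH, EH, Ss)" and n: "1 \<le> n"
  shows "repT {r} {} n (VH, suffix_unions Ss)" "Umap {} (VH, suffix_unions Ss) = (VH, EH, Ss)"
proof -
  have VH: "VH \<subseteq> {r}" and EH: "EH = {}" and len: "length Ss = n" and cover: "\<Union>(set Ss) = VH"
    and disj: "\<And>i j. i < n \<Longrightarrow> j < n \<Longrightarrow> i \<noteq> j \<Longrightarrow> Ss ! i \<inter> Ss ! j = {}"
    using y unfolding repG_def by (auto simp: gedges_def)
  let ?Ls = "suffix_unions Ss"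
  have "?Ls ! 0 = VH" using cover len by (force simp: nth_suffix_unions set_conv_nth)
  moreover have "?Ls ! n = {}" using len by (simp add: nth_suffix_unions)
  moreover have "?Ls ! Suc i \<subseteq> ?Ls ! i" if "i < n" for i
    using that len by (simp add: nth_suffix_unions, intro UN_mono) auto
  moreover have "?Ls ! i \<subseteq> VH" if "i \<le> n" for i
    using that len cover by (auto simp: nth_suffix_unions)
  ultimately have "layering {} VH n ?Ls"
    using n len unfolding layering_def lower_sub_no_edges by simp
  then show "repT {r} {} n (VH, ?Ls)" using VH unfolding repT_def admissible_single_vertex by simp
  show "Umap {} (VH, ?Ls) = (VH, EH, Ss)"
    unfolding Umap_eq using layer_diffs_suffix_unions[of Ss] disj len EH
    by (simp add: gedges_sub_edges_eq_empty_iff)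
qed

lemma lift_segment_single_vertex:
  assumes y: "repG {r} {} n (VH, EH, Ss)" and i: "i < n" and x: "repT {r} {} 1 x"
    and "clsG fl {r} {} 1 (segG (VH, EH, Ss) ! i) = clsG fl {r} {} 1 (Umap {} x)"
  shows "x = (Ss ! i, [Ss ! i, {}])"
proof -
  obtain S where S: "x = (S, [S, {}])" "admissible {r} {} S" using repT_oneE[OF x] .
  have "segG (VH, EH, Ss) ! i = Umap {} x"
    using assms(4) S clsG_single_vertex[OF repG_segG[OF y i]]
      clsG_single_vertex[OF repG_Umap_one[OF S(2)]] by simp
  then show ?thesis using y i S(1) unfolding repG_def by (simp add: segG_nth Umap_one)
qed

lemma lift_single_vertex_unique:
  assumes "repG {r} {} n y" "repT {r} {} n x" "repT {r} {} n x'" "Umap {} x = y"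
    and "y \<in> clsG fl {r} {} n (Umap {} x')"
  shows "x' = x"
proof -
  have "isoG fl (Umap {} x') y" using assms(5) unfolding clsG_def by simp
  moreover have "fst (Umap {} x') \<subseteq> {r}" "fst y \<subseteq> {r}"
    using repT_fst_subset[OF assms(3)] assms(1) unfolding repG_def by (auto split: prod.splits)
  ultimately have "Umap {} x' = Umap {} x"
    using isoG_single_vertex[OF _ wf_Umap[OF assms(3)]] assms(4) by simp
  then show ?thesis by (rule Umap_inj_on_repT[OF assms(3,2)])
qed

lemma rel_segal_single_vertex: "rel_segal fl {r} {}"
  unfolding rel_segal_def
proof (intro allI impI ballI)
  fix n y xs
  assume n: "2 \<le> n" and "y \<in> XG fl {r} {} n"
    and xs: "length xs = n \<and> (\<forall>i<n. xs ! i \<in> XT fl {r} {} 1) \<and>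
      (\<forall>i<n. \<forall>yr\<in>y. \<forall>xr\<in>xs ! i. clsG fl {r} {} 1 (segG yr ! i) = clsG fl {r} {} 1 (Umap {} xr))"
  then obtain VH EH Ss where rep: "repG {r} {} n (VH, EH, Ss)" and y: "y = {(VH, EH, Ss)}"
    unfolding XG_def by (auto simp: clsG_single_vertex)
  define x where "x = (VH, suffix_unions Ss)"
  have x: "repT {r} {} n x" "Umap {} x = (VH, EH, Ss)"
    using suffix_unions_lift_single_vertex[OF rep] n unfolding x_def by simp_all
  have xs_i: "xs ! i = {(Ss ! i, [Ss ! i, {}])}" "repT {r} {} 1 (Ss ! i, [Ss ! i, {}])"
    if i: "i < n" for i
  proof -
    obtain xi where xi: "repT {r} {} 1 xi" "xs ! i = {xi}"
      using xs i unfolding XT_def by (auto simp: clsT_single_vertex)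
    then have "xi = (Ss ! i, [Ss ! i, {}])"
      using xs i y by (intro lift_segment_single_vertex[OF rep i, where fl = fl]) simp_all
    then show "xs ! i = {(Ss ! i, [Ss ! i, {}])}" "repT {r} {} 1 (Ss ! i, [Ss ! i, {}])"
      using xi by simp_all
  qed
  have "segT x ! i = (Ss ! i, [Ss ! i, {}])" if "i < n" for i
    using x(2) that rep unfolding x_def repG_def by (simp add: segT_nth Umap_eq)
  then have exist: "{x} \<in> XT fl {r} {} n \<and> (\<forall>xr\<in>{x}. clsG fl {r} {} n (Umap {} xr) = y \<and>
      (\<forall>i<n. clsT fl {r} {} 1 (segT xr ! i) = xs ! i))"
    using x clsT_in_XT[OF x(1), of fl] rep xs_i
    by (simp add: clsT_single_vertex clsG_single_vertex y)
  have unique: "c = {x}"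
    if c: "c \<in> XT fl {r} {} n" "\<forall>xr\<in>c. clsG fl {r} {} n (Umap {} xr) = y" for c
  proof -
    obtain x' where x': "repT {r} {} n x'" "c = clsT fl {r} {} n x'"
      using c(1) unfolding XT_def by blast
    then have "c = {x'}" by (simp add: clsT_single_vertex)
    have "(VH, EH, Ss) \<in> clsG fl {r} {} n (Umap {} x')" using c(2) y \<open>c = {x'}\<close> by simp
    then show ?thesis using lift_single_vertex_unique[OF rep x(1) x'(1) x(2)] \<open>c = {x'}\<close> by simp
  qed
  show "\<exists>!c. c \<in> XT fl {r} {} n \<and> (\<forall>xr\<in>c. clsG fl {r} {} n (Umap {} xr) = y \<and>
      (\<forall>i<n. clsT fl {r} {} 1 (segT xr ! i) = xs ! i))"
    using exist unique by (intro ex1I[of _ "{x}"]) simp_all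
qed

theorem mainTheorem7:
  fixes V :: "'v set" and r :: 'v and E :: "('v \<times> 'v) set" and fl :: "'v flavour"
  assumes "rooted_tree V r E"
    and "\<forall>P. fl = Planar P \<longrightarrow> planar_structure V E P"
  shows "rel_segal fl V E \<longleftrightarrow> card V = 1"
proof
  show "rel_segal fl V E \<Longrightarrow> card V = 1"
    using not_rel_segal_if_nontrivial[OF assms(1)] by blast
next
  assume "card V = 1"
  then obtain v where "V = {v}" by (rule card_1_singletonE)
  moreover have "r \<in> V" "E \<subseteq> V \<times> V" "(r, r) \<notin> E"
    using assms(1) rooted_tree_no_loop[OF assms(1)] unfolding rooted_tree_def by auto
  ultimately have "V = {r}" "E = {}" by auto
  then show "rel_segal fl V E" by (simp add: rel_segal_single_vertex)
qed

end
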